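(* Let $\gamma>0$, $\beta:\mathcal S\to(0,+\infty)$ of class $\mathcal C^1$, $\bar y\in(0,1]$ and $(x_0,y_0)\in\mathcal S$ with $0<y_0\le\bar y$. Let $u\in\mathcal U^{\bar y}_{x_0,y_0}$ satisfy $J(u)=\int_0^\infty u(t)\,dt<+\infty$, and let $(x(t),y(t))$ be the corresponding solution of the controlled CBF-SIR model with initial condition $(x_0,y_0)$. Then there exists a finite time $\bar t$ such that $R(x(\bar t),y(\bar t))<1$.
   Context: $\mathcal S=\{(x,y)\in\mathbb R^2_+: x+y\le1\}$; $R(x,y)=\frac1\gamma\beta(x,y)x$. $\mathcal U$ is the set of functions $u:[0,\infty)\to[0,1]$ continuous except on a set of points without accumulation points, at each of which $u$ has finite one-sided limits and equals its right limit. Controlled CBF-SIR model: $\dot x=-(1-u(t))\gamma R(x,y)y$, $\dot y=\gamma((1-u(t))R(x,y)-1)y$, with continuous piecewise-$\mathcal C^1$ solutions in $\mathcal S$ solving the ODE outside jump times of $u$. $\mathcal U^{\bar y}_{x_0,y_0}$ is the set of $u\in\mathcal U$ whose solution from $(x_0,y_0)$ satisfies $y(t)\le\bar y$ for all $t\ge0$. *)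

theory Defs
  imports "HOL-Analysis.Analysis"
begin

definition simplexS :: "(real \<times> real) set" where
  "simplexS = {(x, y). 0 \<le> x \<and> 0 \<le> y \<and> x + y \<le> 1}"

definition Rfun :: "real \<Rightarrow> (real \<times> real \<Rightarrow> real) \<Rightarrow> real \<Rightarrow> real \<Rightarrow> real" where
  "Rfun \<gamma> \<beta> x y = (1 / \<gamma>) * \<beta> (x, y) * x"

definition C1_on_S :: "(real \<times> real \<Rightarrow> real) \<Rightarrow> bool" where
  "C1_on_S \<beta> \<longleftrightarrow> (\<exists>T D. open T \<and> simplexS \<subseteq> T \<and>
      (\<forall>p\<in>T. (\<beta> has_derivative blinfun_apply (D p)) (at p)) \<and> continuous_on T D)"

definition admissible :: "(real \<Rightarrow> real) \<Rightarrow> bool" where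
  "admissible u \<longleftrightarrow> (\<forall>t\<ge>0. 0 \<le> u t \<and> u t \<le> 1) \<and>
     (\<exists>D. D \<subseteq> {0..} \<and> (\<forall>T. finite (D \<inter> {0..T})) \<and>
        (\<forall>t\<in>{0..} - D. continuous (at t within {0..}) u) \<and>
        (\<forall>t\<in>D. (u \<longlongrightarrow> u t) (at_right t) \<and> (0 < t \<longrightarrow> (\<exists>l. (u \<longlongrightarrow> l) (at_left t)))))"

definition jump_times :: "(real \<Rightarrow> real) \<Rightarrow> real set" where
  "jump_times u = {t. 0 \<le> t \<and> \<not> continuous (at t within {0..}) u}"

definition is_solution ::
  "real \<Rightarrow> (real \<times> real \<Rightarrow> real) \<Rightarrow> (real \<Rightarrow> real) \<Rightarrow> real \<Rightarrow> real
     \<Rightarrow> (real \<Rightarrow> real) \<Rightarrow> (real \<Rightarrow> real) \<Rightarrow> bool" where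
  "is_solution \<gamma> \<beta> u x0 y0 x y \<longleftrightarrow>
     x 0 = x0 \<and> y 0 = y0 \<and>
     continuous_on {0..} x \<and> continuous_on {0..} y \<and>
     (\<forall>t\<ge>0. (x t, y t) \<in> simplexS) \<and>
     (\<forall>t\<in>{0..} - jump_times u.
        (x has_real_derivative (- (1 - u t) * \<gamma> * Rfun \<gamma> \<beta> (x t) (y t) * y t))
           (at t within {0..}) \<and>
        (y has_real_derivative (\<gamma> * ((1 - u t) * Rfun \<gamma> \<beta> (x t) (y t) - 1) * y t))
           (at t within {0..}))"

end

theory Submission
  imports Defs
begin

text \<open>Suppose \<open>R(x(t), y(t)) \<ge> 1\<close> for all \<open>t \<ge> 0\<close>. Then \<open>y' \<ge> -\<gamma> u y\<close>, so the integrating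
  factor \<open>exp(\<gamma> \<integral>\<^sub>0\<^sup>t u)\<close> gives \<open>y(t) \<ge> y\<^sub>0 exp(-\<gamma> J(u)) =: c > 0\<close> for all times.
  But \<open>(x + y)' = -\<gamma> y \<le> -\<gamma> c\<close>, so \<open>x + y\<close> would become negative in finite time,
  leaving \<open>S\<close>.\<close>

lemma le_of_deriv_nonneg_off_finite:
  fixes f f' :: "real \<Rightarrow> real"
  assumes "a \<le> b" "finite S" "continuous_on {a..b} f"
    and "\<And>t. t \<in> {a<..<b} - S \<Longrightarrow> (f has_real_derivative f' t) (at t)"
    and "\<And>t. t \<in> {a<..<b} - S \<Longrightarrow> 0 \<le> f' t"
  shows "f a \<le> f b"
proof -
  define g where "g t = (if t \<in> {a<..<b} - S then f' t else 0)" for t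
  have "(g has_integral (f b - f a)) {a..b}"
  proof (rule fundamental_theorem_of_calculus_interior_strong[OF assms(2,1) _ assms(3)])
    fix t assume "t \<in> {a<..<b} - S"
    then show "(f has_vector_derivative g t) (at t)"
      using assms(4) by (simp add: g_def has_real_derivative_iff_has_vector_derivative[symmetric])
  qed
  moreover have "0 \<le> g t" for t
    using assms(5) by (simp add: g_def)
  ultimately have "0 \<le> f b - f a"
    by (rule has_integral_nonneg)
  then show ?thesis
    by simp
qed

lemma integrating_factor_le:
  fixes y V y' v :: "real \<Rightarrow> real"
  assumes "a \<le> b" "finite S" "continuous_on {a..b} y" "continuous_on {a..b} V"
    and "\<And>t. t \<in> {a<..<b} - S \<Longrightarrow> (y has_real_derivative y' t) (at t)"
    and "\<And>t. t \<in> {a<..<b} - S \<Longrightarrow> (V has_real_derivative v t) (at t)"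
    and "\<And>t. t \<in> {a<..<b} - S \<Longrightarrow> 0 \<le> y' t + v t * y t"
  shows "y a * exp (V a) \<le> y b * exp (V b)"
proof (rule le_of_deriv_nonneg_off_finite[OF assms(1,2)])
  show "continuous_on {a..b} (\<lambda>t. y t * exp (V t))"
    using assms(3,4) by (intro continuous_intros)
next
  fix t assume t: "t \<in> {a<..<b} - S"
  show "((\<lambda>t. y t * exp (V t)) has_real_derivative (y' t + v t * y t) * exp (V t)) (at t)"
    by (auto intro!: derivative_eq_intros assms(5,6)[OF t] simp: algebra_simps)
  show "0 \<le> (y' t + v t * y t) * exp (V t)"
    using assms(7)[OF t] by simp
qed

lemma integral_has_real_derivative_at_continuity_point:
  fixes u :: "real \<Rightarrow> real"
  assumes "u integrable_on {a..b}" "t \<in> {a<..<b}" "continuous (at t within {a..b}) u"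
  shows "((\<lambda>s. integral {a..s} u) has_real_derivative u t) (at t)"
proof -
  have "((\<lambda>s. integral {a..s} u) has_vector_derivative u t) (at t within {a..b})"
    using integral_has_vector_derivative_continuous_at[of u a b t "{}"] assms by auto
  moreover have "at t within {a..b} = at t"
    using assms(2) by (intro at_within_interior) simp
  ultimately show ?thesis
    by (simp add: has_real_derivative_iff_has_vector_derivative)
qed

lemma has_real_derivative_at_within_atLeast:
  assumes "(f has_real_derivative d) (at t within {a..})" "a < t"
  shows "(f has_real_derivative d) (at t)"
  using assms at_within_interior[of t "{a..}"] by simp

lemma admissible_finite_jump_times:
  assumes "admissible u"
  shows "finite (jump_times u \<inter> {0..T})"
proof -
  obtain D where "\<And>T. finite (D \<inter> {0..T})" "\<forall>t\<in>{0..} - D. continuous (at t within {0..}) u"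
    using assms unfolding admissible_def by blast
  then have "jump_times u \<inter> {0..T} \<subseteq> D \<inter> {0..T}"
    by (auto simp: jump_times_def)
  then show ?thesis
    using \<open>finite (D \<inter> {0..T})\<close> by (rule finite_subset)
qed

lemma is_solution_has_real_derivative:
  assumes "is_solution \<gamma> \<beta> u x0 y0 x y" "0 < t" "t \<notin> jump_times u"
  shows "(x has_real_derivative (- (1 - u t) * \<gamma> * Rfun \<gamma> \<beta> (x t) (y t) * y t)) (at t)"
    and "(y has_real_derivative (\<gamma> * ((1 - u t) * Rfun \<gamma> \<beta> (x t) (y t) - 1) * y t)) (at t)"
  using assms by (auto simp: is_solution_def intro: has_real_derivative_at_within_atLeast)

lemma infected_lower_bound_if_reproduction_ge_1:
  assumes "0 \<le> \<gamma>" "admissible u" "is_solution \<gamma> \<beta> u x0 y0 x y"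
    and "0 \<le> b" "u integrable_on {0..b}"
    and "\<forall>t\<in>{0..b}. 1 \<le> Rfun \<gamma> \<beta> (x t) (y t)"
  shows "y0 * exp (- \<gamma> * integral {0..b} u) \<le> y b"
proof -
  define U where "U s = integral {0..s} u" for s
  have sol: "y 0 = y0" "continuous_on {0..} y" "\<forall>t\<ge>0. (x t, y t) \<in> simplexS"
    using assms(3) by (auto simp: is_solution_def)
  have u01: "0 \<le> u t" "u t \<le> 1" if "0 \<le> t" for t
    using assms(2) that by (auto simp: admissible_def)
  have "y 0 * exp (\<gamma> * U 0) \<le> y b * exp (\<gamma> * U b)"
  proof (rule integrating_factor_le[OF assms(4) admissible_finite_jump_times[OF assms(2)]])
    show "continuous_on {0..b} y"
      using sol(2) by (rule continuous_on_subset) auto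
    show "continuous_on {0..b} (\<lambda>s. \<gamma> * U s)"
      unfolding U_def using indefinite_integral_continuous_1[OF assms(5)]
      by (intro continuous_intros)
  next
    fix t assume t: "t \<in> {0<..<b} - jump_times u \<inter> {0..b}"
    then have "continuous (at t within {0..b}) u"
      by (auto simp: jump_times_def intro: continuous_within_subset)
    then have "(U has_real_derivative u t) (at t)"
      unfolding U_def using t assms(5) by (intro integral_has_real_derivative_at_continuity_point) auto
    then show "((\<lambda>s. \<gamma> * U s) has_real_derivative \<gamma> * u t) (at t)"
      by (rule DERIV_cmult)
    show "(y has_real_derivative (\<gamma> * ((1 - u t) * Rfun \<gamma> \<beta> (x t) (y t) - 1) * y t)) (at t)"
      using t by (intro is_solution_has_real_derivative[OF assms(3)]) auto
    have "0 \<le> (1 - u t) * (Rfun \<gamma> \<beta> (x t) (y t) - 1)"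
      using t u01[of t] assms(6) by simp
    moreover have "0 \<le> \<gamma> * y t"
      using t sol(3) assms(1) by (simp add: simplexS_def)
    moreover have "\<gamma> * ((1 - u t) * Rfun \<gamma> \<beta> (x t) (y t) - 1) * y t + \<gamma> * u t * y t
        = \<gamma> * y t * ((1 - u t) * (Rfun \<gamma> \<beta> (x t) (y t) - 1))"
      by (simp add: algebra_simps)
    ultimately show "0 \<le> \<gamma> * ((1 - u t) * Rfun \<gamma> \<beta> (x t) (y t) - 1) * y t + \<gamma> * u t * y t"
      by simp
  qed
  then show ?thesis
    by (simp add: U_def sol(1) exp_minus field_simps)
qed

lemma population_decrease_if_infected_ge:
  assumes "0 \<le> \<gamma>" "admissible u" "is_solution \<gamma> \<beta> u x0 y0 x y"
    and "0 \<le> b" "\<forall>t\<in>{0..b}. c \<le> y t"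
  shows "x b + y b + \<gamma> * c * b \<le> x0 + y0"
proof -
  have sol: "x 0 = x0" "y 0 = y0" "continuous_on {0..} x" "continuous_on {0..} y"
    using assms(3) by (auto simp: is_solution_def)
  have "- (x 0 + y 0 + \<gamma> * c * 0) \<le> - (x b + y b + \<gamma> * c * b)"
  proof (rule le_of_deriv_nonneg_off_finite[OF assms(4) admissible_finite_jump_times[OF assms(2)]])
    show "continuous_on {0..b} (\<lambda>s. - (x s + y s + \<gamma> * c * s))"
      using continuous_on_subset[OF sol(3)] continuous_on_subset[OF sol(4)]
      by (intro continuous_intros) auto
  next
    fix t assume t: "t \<in> {0<..<b} - jump_times u \<inter> {0..b}"
    then have "0 < t" "t \<notin> jump_times u" by auto
    note deriv = is_solution_has_real_derivative[OF assms(3) this]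
    show "((\<lambda>s. - (x s + y s + \<gamma> * c * s)) has_real_derivative \<gamma> * (y t - c)) (at t)"
      by (rule derivative_eq_intros deriv refl | simp add: algebra_simps)+
    show "0 \<le> \<gamma> * (y t - c)"
      using t assms(1,5) by simp
  qed
  then show ?thesis
    by (simp add: sol)
qed

theorem lemma7:
  fixes \<gamma> ybar x0 y0 :: real and \<beta> :: "real \<times> real \<Rightarrow> real"
    and u x y :: "real \<Rightarrow> real"
  assumes "\<gamma> > 0"
    and "C1_on_S \<beta>" and "\<forall>p\<in>simplexS. \<beta> p > 0"
    and "0 < ybar" and "ybar \<le> 1"
    and "(x0, y0) \<in> simplexS" and "0 < y0" and "y0 \<le> ybar"
    and "admissible u"
    and "is_solution \<gamma> \<beta> u x0 y0 x y"
    and "\<forall>t\<ge>0. y t \<le> ybar"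
    and "u integrable_on {0..}"
  shows "\<exists>tbar\<ge>0. Rfun \<gamma> \<beta> (x tbar) (y tbar) < 1"
proof (rule ccontr)
  assume "\<not> ?thesis"
  then have R_ge_1: "\<forall>t\<in>{0..b}. 1 \<le> Rfun \<gamma> \<beta> (x t) (y t)" for b
    by force
  define c where "c = y0 * exp (- \<gamma> * integral {0..} u)"
  have "c \<le> y t" if "0 \<le> t" for t
  proof -
    have u_int: "u integrable_on {0..t}"
      using assms(12) by (rule integrable_on_subinterval) auto
    have "integral {0..t} u \<le> integral {0..} u"
      using assms(9,12) u_int by (intro integral_subset_le) (auto simp: admissible_def)
    then have "c \<le> y0 * exp (- \<gamma> * integral {0..t} u)"
      using assms(1,7) by (simp add: c_def)
    also have "\<dots> \<le> y t"
      using assms(1,9,10) that u_int R_ge_1 by (intro infected_lower_bound_if_reproduction_ge_1) auto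
    finally show ?thesis .
  qed
  then have y_ge_c: "\<forall>t\<in>{0..b}. c \<le> y t" for b
    by simp
  define b where "b = 2 / (\<gamma> * c)"
  have "0 < \<gamma> * c"
    using assms(1,7) by (simp add: c_def)
  then have b: "0 \<le> b" "\<gamma> * c * b = 2"
    by (auto simp: b_def)
  then have "x b + y b + 2 \<le> x0 + y0"
    using population_decrease_if_infected_ge[OF _ assms(9,10) b(1) y_ge_c] assms(1) by simp
  moreover have "(x b, y b) \<in> simplexS"
    using assms(10) b(1) by (simp add: is_solution_def)
  ultimately show False
    using assms(6) by (simp add: simplexS_def)
qed

end
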